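(* The maps $\Psi,\Phi:\mathfrak{S}_n\to\mathfrak{S}_n$ are inverses of each other. Moreover, for every $\pi\in\mathfrak{S}_n$, $$\operatorname{Odd}(\pi)=\operatorname{Redge}(\Psi(\pi))\quad\text{and}\quad \operatorname{Redge}(\pi)=\operatorname{Odd}(\Phi(\pi)).$$
   Context: For $\pi\in\mathfrak{S}_n$ (a word $a_1\cdots a_n$) and $x\in[n]$, the $x$-factorization is $\pi=w_1w_2xw_4w_5$ where $w_2$ (resp. $w_4$) is the maximal contiguous subword immediately to the left (resp. right) of $x$ all of whose letters are smaller than $x$; set $\varphi_x(\pi)=w_1w_4xw_2w_5$. These $\varphi_x$ are commuting involutions. The decreasing binary tree of a word $w$ with distinct positive integer letters: empty if $w$ is empty; otherwise write $w=LmR$ with $m$ the greatest letter, the root is labeled $m$, its left subtree is the tree of $L$ and its right subtree the tree of $R$. For $x\in[n]$, $r_\pi(x)$ is the number of right edges on the path from the root to $x$ in the decreasing binary tree of $\pi$. $\operatorname{Odd}(\pi)=\{x\in[n]:r_\pi(x)\text{ odd}\}$, and $\operatorname{Redge}(\pi)$ is the set of vertices that are the lower ends of right edges in that tree. Define $\Psi(\pi)=\prod_{x\in\operatorname{Odd}(\pi)}\varphi_x(\pi)$ and $\Phi(\pi)=\prod_{x\in\operatorname{Redge}(\pi)}\varphi_x(\pi)$. *)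

theory Defs
  imports "HOL-Library.Tree"
begin

definition is_perm :: "nat \<Rightarrow> nat list \<Rightarrow> bool" where
  "is_perm n w \<longleftrightarrow> distinct w \<and> set w = {1..n}"

definition phi :: "nat \<Rightarrow> nat list \<Rightarrow> nat list" where
  "phi x w =
     (if x \<notin> set w then w else
      (let L = takeWhile (\<lambda>a. a \<noteq> x) w;
           R = tl (dropWhile (\<lambda>a. a \<noteq> x) w);
           w2 = rev (takeWhile (\<lambda>a. a < x) (rev L));
           w1 = take (length L - length w2) L;
           w4 = takeWhile (\<lambda>a. a < x) R;
           w5 = dropWhile (\<lambda>a. a < x) R
       in w1 @ w4 @ [x] @ w2 @ w5))"

(* product of the phi_x over a finite set of letters; composed in increasing
   order of x (the phi_x commute, so the order is immaterial) *)
definition phi_prod :: "nat set \<Rightarrow> nat list \<Rightarrow> nat list" where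
  "phi_prod S w = fold phi (sorted_list_of_set S) w"

lemma length_takeWhile_neq_less:
  "m \<in> set w \<Longrightarrow> length (takeWhile (\<lambda>a. a \<noteq> m) w) < length w"
  by (induction w) auto

lemma length_tl_dropWhile_less:
  "w \<noteq> [] \<Longrightarrow> length (tl (dropWhile P w)) < length w"
  using length_dropWhile_le[of P w] by (cases w) auto

function dtree :: "nat list \<Rightarrow> nat tree" where
  "dtree w = (if w = [] then Leaf else
     Node (dtree (takeWhile (\<lambda>a. a \<noteq> Max (set w)) w))
          (Max (set w))
          (dtree (tl (dropWhile (\<lambda>a. a \<noteq> Max (set w)) w))))"
  by pat_completeness auto
termination
  by (relation "measure length")
     (auto intro: length_takeWhile_neq_less length_tl_dropWhile_less simp del: length_tl)

fun rcount :: "nat tree \<Rightarrow> nat \<Rightarrow> nat" where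
  "rcount Leaf x = 0"
| "rcount (Node l a r) x =
     (if x = a then 0 else if x \<in> set_tree l then rcount l x else Suc (rcount r x))"

fun redges :: "nat tree \<Rightarrow> nat set" where
  "redges Leaf = {}"
| "redges (Node l a r) = redges l \<union> redges r \<union>
     (case r of Leaf \<Rightarrow> {} | Node _ b _ \<Rightarrow> {b})"

definition r_pi :: "nat list \<Rightarrow> nat \<Rightarrow> nat" where
  "r_pi w x = rcount (dtree w) x"

definition Odd_set :: "nat \<Rightarrow> nat list \<Rightarrow> nat set" where
  "Odd_set n w = {x \<in> {1..n}. odd (r_pi w x)}"

definition Redge :: "nat list \<Rightarrow> nat set" where
  "Redge w = redges (dtree w)"

definition Psi :: "nat \<Rightarrow> nat list \<Rightarrow> nat list" where
  "Psi n w = phi_prod (Odd_set n w) w"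

definition Phi :: "nat list \<Rightarrow> nat list" where
  "Phi w = phi_prod (Redge w) w"

end

theory Submission
  imports Defs
begin

(*
  Read a word as the in-order traversal of its decreasing binary tree T. For a letter x, the
  words w2 and w4 of the x-factorization are the readings of the left and right subtrees of x,
  so phi x exchanges these two subtrees, and phi_prod S mirrors T at the vertices in S; the
  result is again a decreasing tree, and its reading is the new word.

  Now mirror T at Odd(pi). A child c of p becomes a right child iff exactly one of "c is a right
  child in T" and "r(p) is odd" holds, that is iff r(c) is odd. Hence Redge(Psi(pi)) = Odd(pi),
  and Phi(Psi(pi)) mirrors twice at the same set, which gives back pi. So Psi has the left
  inverse Phi on the finite set of permutations; it is therefore a bijection with inverse Phi,
  and writing pi = Psi(sigma) turns Redge(Psi(sigma)) = Odd(sigma) into Redge(pi) = Odd(Phi(pi)).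
*)

declare dtree.simps[simp del]

fun mirror_at :: "'a set \<Rightarrow> 'a tree \<Rightarrow> 'a tree" where
  "mirror_at S \<langle>\<rangle> = \<langle>\<rangle>"
| "mirror_at S \<langle>l, a, r\<rangle> =
     (if a \<in> S then \<langle>mirror_at S r, a, mirror_at S l\<rangle> else \<langle>mirror_at S l, a, mirror_at S r\<rangle>)"

fun max_heap :: "'a::linorder tree \<Rightarrow> bool" where
  "max_heap \<langle>\<rangle> = True"
| "max_heap \<langle>l, m, r\<rangle> = ((\<forall>x \<in> set_tree l \<union> set_tree r. x < m) \<and> max_heap l \<and> max_heap r)"

lemma set_tree_mirror_at[simp]: "set_tree (mirror_at S t) = set_tree t"
  by (induction t) auto

lemma distinct_inorder_mirror_at[simp]: "distinct (inorder (mirror_at S t)) = distinct (inorder t)"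
  by (induction t) auto

lemma max_heap_mirror_at[simp]: "max_heap (mirror_at S t) = max_heap t"
  by (induction t) auto

lemma mirror_at_cong:
  "(\<And>x. x \<in> set_tree t \<Longrightarrow> x \<in> S \<longleftrightarrow> x \<in> S') \<Longrightarrow> mirror_at S t = mirror_at S' t"
  by (induction t) auto

lemma mirror_at_disjoint: "S \<inter> set_tree t = {} \<Longrightarrow> mirror_at S t = t"
  by (induction t) auto

lemma mirror_at_mirror_at: "mirror_at S (mirror_at T t) = mirror_at ((S - T) \<union> (T - S)) t"
  by (induction t) auto

lemma takeWhile_neq_append_Cons[simp]:
  "a \<notin> set xs \<Longrightarrow> takeWhile (\<lambda>z. z \<noteq> a) (xs @ a # ys) = xs"
  by (induction xs) auto

lemma dropWhile_neq_append_Cons[simp]: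
  "a \<notin> set xs \<Longrightarrow> dropWhile (\<lambda>z. z \<noteq> a) (xs @ a # ys) = a # ys"
  by (induction xs) auto

lemma phi_Max:
  assumes "\<forall>z \<in> set xs \<union> set ys. z < a"
  shows "phi a (xs @ a # ys) = ys @ a # xs"
proof -
  have whole: "takeWhile (\<lambda>z. z < a) (rev xs) = rev xs" "takeWhile (\<lambda>z. z < a) ys = ys"
    "dropWhile (\<lambda>z. z < a) ys = []"
    using assms by auto
  have "a \<notin> set xs" using assms by auto
  then show ?thesis by (simp add: phi_def Let_def whole)
qed

lemma phi_append_left:
  assumes "x \<in> set xs" "x < a"
  shows "phi x (xs @ a # ys) = phi x xs @ a # ys"
  using assms by (simp add: phi_def Let_def takeWhile_tail dropWhile_append3)

lemma phi_append_right:
  assumes "x \<in> set ys" "x \<notin> set xs" "x < a"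
  shows "phi x (xs @ a # ys) = xs @ a # phi x ys"
proof -
  define L where "L = takeWhile (\<lambda>z. z \<noteq> x) ys"
  define k where "k = length (takeWhile (\<lambda>z. z < x) (rev L))"
  have "takeWhile (\<lambda>z. z \<noteq> x) (xs @ a # ys) = xs @ a # L"
    "dropWhile (\<lambda>z. z \<noteq> x) (xs @ a # ys) = dropWhile (\<lambda>z. z \<noteq> x) ys"
    using assms by (induction xs) (auto simp: L_def)
  moreover have "k \<le> length L" unfolding k_def by (metis length_rev length_takeWhile_le)
  ultimately show ?thesis using assms
    by (simp add: phi_def Let_def takeWhile_tail L_def[symmetric] k_def[symmetric] Suc_diff_le)
qed

lemma phi_inorder_mirror_at:
  assumes "max_heap t" "distinct (inorder t)"
  shows "phi x (inorder t) = inorder (mirror_at {x} t)"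
  using assms
proof (induction t)
  case Leaf
  then show ?case by (simp add: phi_def)
next
  case (Node l a r)
  then have lt: "\<forall>z \<in> set (inorder l) \<union> set (inorder r). z < a" by simp
  consider "x = a" | "x \<in> set_tree l" | "x \<in> set_tree r" | "x \<notin> set_tree \<langle>l, a, r\<rangle>"
    by auto
  then show ?case
  proof cases
    case 1
    with lt have "x \<notin> set_tree l" "x \<notin> set_tree r" by auto
    with 1 lt show ?thesis by (simp add: phi_Max mirror_at_disjoint)
  next
    case 2
    with Node lt have "x \<notin> set_tree r" "x < a" "x \<noteq> a" by auto
    with 2 Node show ?thesis by (simp add: phi_append_left mirror_at_disjoint)
  next
    case 3
    with Node lt have "x \<notin> set_tree l" "x < a" "x \<noteq> a" by auto
    with 3 Node show ?thesis by (simp add: phi_append_right mirror_at_disjoint)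
  next
    case 4
    then show ?thesis by (simp add: phi_def mirror_at_disjoint)
  qed
qed

lemma fold_phi_inorder:
  "distinct xs \<Longrightarrow> max_heap t \<Longrightarrow> distinct (inorder t) \<Longrightarrow>
   fold phi xs (inorder t) = inorder (mirror_at (set xs) t)"
proof (induction xs arbitrary: t)
  case Nil
  then show ?case by (simp add: mirror_at_disjoint)
next
  case (Cons x xs)
  then show ?case
    by (simp add: phi_inorder_mirror_at mirror_at_mirror_at insert_absorb Un_Diff)
qed

lemma dtree_Nil[simp]: "dtree [] = \<langle>\<rangle>"
  by (simp add: dtree.simps)

lemma dtree_append_Max:
  assumes "\<forall>x \<in> set L \<union> set R. x < m"
  shows "dtree (L @ m # R) = \<langle>dtree L, m, dtree R\<rangle>"
proof -
  have "Max (set (L @ m # R)) = m" using assms by (intro Max_eqI) (auto intro: less_imp_le)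
  moreover have "m \<notin> set L" using assms by auto
  ultimately show ?thesis by (subst dtree.simps) simp
qed

lemma dtree_inorder: "max_heap t \<Longrightarrow> dtree (inorder t) = t"
  by (induction t) (auto simp: dtree_append_Max)

lemma max_heap_inorder_dtree: "distinct w \<Longrightarrow> max_heap (dtree w) \<and> inorder (dtree w) = w"
proof (induction "length w" arbitrary: w rule: less_induct)
  case less
  show ?case
  proof (cases "w = []")
    case True
    then show ?thesis by simp
  next
    case False
    define m where "m = Max (set w)"
    have "m \<in> set w" using False by (simp add: m_def)
    then obtain L R where w: "w = L @ m # R" by (meson split_list)
    have lt: "\<forall>x \<in> set L \<union> set R. x < m"
    proof
      fix x assume "x \<in> set L \<union> set R"
      moreover have "x \<le> m" if "x \<in> set w" for x using that by (simp add: m_def)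
      ultimately show "x < m" using less.prems w by (fastforce simp: order.order_iff_strict)
    qed
    have "max_heap (dtree L) \<and> inorder (dtree L) = L" "max_heap (dtree R) \<and> inorder (dtree R) = R"
      using less w by auto
    then show ?thesis using w lt by (simp add: dtree_append_Max flip: set_inorder)
  qed
qed

lemma set_tree_dtree: "distinct w \<Longrightarrow> set_tree (dtree w) = set w"
  by (metis max_heap_inorder_dtree set_inorder)

lemma phi_prod_eq_inorder_mirror_at:
  "finite S \<Longrightarrow> distinct w \<Longrightarrow> phi_prod S w = inorder (mirror_at S (dtree w))"
  using fold_phi_inorder[of "sorted_list_of_set S" "dtree w"] max_heap_inorder_dtree[of w]
  by (simp add: phi_prod_def)

lemma dtree_phi_prod:
  "finite S \<Longrightarrow> distinct w \<Longrightarrow> dtree (phi_prod S w) = mirror_at S (dtree w)"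
  by (simp add: phi_prod_eq_inorder_mirror_at dtree_inorder max_heap_inorder_dtree)

lemma is_perm_phi_prod:
  assumes "finite S" "is_perm n w"
  shows "is_perm n (phi_prod S w)"
proof -
  have "distinct w" using assms(2) by (simp add: is_perm_def)
  with assms show ?thesis
    by (simp add: is_perm_def phi_prod_eq_inorder_mirror_at max_heap_inorder_dtree set_tree_dtree)
qed

(* The offset b is the number of right edges above the root of t when t is a subtree. *)
definition odd_nodes :: "nat \<Rightarrow> nat tree \<Rightarrow> nat set" where
  "odd_nodes b t = {x \<in> set_tree t. odd (b + rcount t x)}"

fun root_set :: "'a tree \<Rightarrow> 'a set" where
  "root_set \<langle>\<rangle> = {}"
| "root_set \<langle>_, a, _\<rangle> = {a}"

lemma root_set_mirror_at[simp]: "root_set (mirror_at S t) = root_set t"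
  by (cases t) auto

lemma redges_Node[simp]: "redges \<langle>l, a, r\<rangle> = redges l \<union> redges r \<union> root_set r"
  by (cases r) auto

declare redges.simps(2)[simp del]

lemma odd_nodes_Node:
  "distinct (inorder \<langle>l, a, r\<rangle>) \<Longrightarrow>
   odd_nodes b \<langle>l, a, r\<rangle> = (if odd b then {a} else {}) \<union> odd_nodes b l \<union> odd_nodes (Suc b) r"
  by (auto simp: odd_nodes_def)

lemma redges_mirror_at_odd_nodes:
  "distinct (inorder t) \<Longrightarrow>
   redges (mirror_at (odd_nodes b t) t) \<union> (if odd b then root_set t else {}) = odd_nodes b t"
proof (induction t arbitrary: b)
  case Leaf
  then show ?case by (simp add: odd_nodes_def)
next
  case (Node l a r)
  let ?S = "odd_nodes b \<langle>l, a, r\<rangle>"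
  have dl: "distinct (inorder l)" and dr: "distinct (inorder r)" using Node.prems by auto
  have S: "?S = (if odd b then {a} else {}) \<union> odd_nodes b l \<union> odd_nodes (Suc b) r"
    using Node.prems by (rule odd_nodes_Node)
  have l: "mirror_at ?S l = mirror_at (odd_nodes b l) l"
    and r: "mirror_at ?S r = mirror_at (odd_nodes (Suc b) r) r"
    using Node.prems by (auto simp: odd_nodes_def intro!: mirror_at_cong)
  have a: "a \<in> ?S \<longleftrightarrow> odd b" using Node.prems by (auto simp: odd_nodes_def)
  note IH = Node.IH(1)[OF dl, of b] Node.IH(2)[OF dr, of "Suc b"]
  show ?case
  proof (cases "odd b")
    case True
    have "redges (mirror_at ?S \<langle>l, a, r\<rangle>) =
      redges (mirror_at (odd_nodes (Suc b) r) r) \<union> (redges (mirror_at (odd_nodes b l) l) \<union> root_set l)"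
      using True by (simp add: a l r Un_assoc)
    then show ?thesis using IH True S by auto
  next
    case False
    have "redges (mirror_at ?S \<langle>l, a, r\<rangle>) =
      redges (mirror_at (odd_nodes b l) l) \<union> (redges (mirror_at (odd_nodes (Suc b) r) r) \<union> root_set r)"
      using False by (simp add: a l r Un_assoc)
    then show ?thesis using IH False S by auto
  qed
qed

lemma finite_Odd_set[simp]: "finite (Odd_set n \<pi>)"
  by (simp add: Odd_set_def)

lemma Odd_set_eq_odd_nodes: "is_perm n \<pi> \<Longrightarrow> Odd_set n \<pi> = odd_nodes 0 (dtree \<pi>)"
  by (auto simp: is_perm_def Odd_set_def odd_nodes_def r_pi_def set_tree_dtree)

lemma is_perm_Psi: "is_perm n \<pi> \<Longrightarrow> is_perm n (Psi n \<pi>)"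
  by (simp add: Psi_def is_perm_phi_prod)

lemma dtree_Psi: "is_perm n \<pi> \<Longrightarrow> dtree (Psi n \<pi>) = mirror_at (Odd_set n \<pi>) (dtree \<pi>)"
  by (simp add: Psi_def is_perm_def dtree_phi_prod)

lemma Redge_Psi: "is_perm n \<pi> \<Longrightarrow> Redge (Psi n \<pi>) = Odd_set n \<pi>"
  using redges_mirror_at_odd_nodes[of "dtree \<pi>" 0]
  by (simp add: Redge_def dtree_Psi Odd_set_eq_odd_nodes is_perm_def max_heap_inorder_dtree)

lemma Phi_Psi:
  assumes "is_perm n \<pi>"
  shows "Phi (Psi n \<pi>) = \<pi>"
proof -
  let ?S = "Odd_set n \<pi>"
  have "distinct \<pi>" "distinct (Psi n \<pi>)" using assms is_perm_Psi[OF assms] by (auto simp: is_perm_def)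
  then have "Phi (Psi n \<pi>) = inorder (mirror_at ?S (mirror_at ?S (dtree \<pi>)))"
    using assms by (simp add: Phi_def Redge_Psi dtree_Psi phi_prod_eq_inorder_mirror_at)
  also have "\<dots> = \<pi>"
    using \<open>distinct \<pi>\<close> by (simp add: mirror_at_mirror_at mirror_at_disjoint max_heap_inorder_dtree)
  finally show ?thesis .
qed

lemma finite_is_perm: "finite {\<pi>. is_perm n \<pi>}"
  by (rule finite_subset[OF _ finite_subset_distinct[of "{1..n}"]]) (auto simp: is_perm_def)

theorem theorem7p1:
  fixes n :: nat
  shows "(\<forall>\<pi>. is_perm n \<pi> \<longrightarrow> is_perm n (Psi n \<pi>) \<and> is_perm n (Phi \<pi>)
            \<and> Phi (Psi n \<pi>) = \<pi> \<and> Psi n (Phi \<pi>) = \<pi>)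
       \<and> (\<forall>\<pi>. is_perm n \<pi> \<longrightarrow>
            Odd_set n \<pi> = Redge (Psi n \<pi>) \<and> Redge \<pi> = Odd_set n (Phi \<pi>))"
proof -
  let ?P = "{\<pi>. is_perm n \<pi>}"
  have "Psi n ` ?P = ?P"
  proof (rule endo_inj_surj[OF finite_is_perm])
    show "Psi n ` ?P \<subseteq> ?P" using is_perm_Psi by auto
    show "inj_on (Psi n) ?P" by (rule inj_on_inverseI[where g = Phi]) (simp add: Phi_Psi)
  qed
  have Phi: "is_perm n (Phi \<pi>) \<and> Psi n (Phi \<pi>) = \<pi> \<and> Redge \<pi> = Odd_set n (Phi \<pi>)"
    if "is_perm n \<pi>" for \<pi>
  proof -
    from \<open>Psi n ` ?P = ?P\<close> that obtain \<sigma> where "is_perm n \<sigma>" "\<pi> = Psi n \<sigma>" by auto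
    then show ?thesis by (simp add: Phi_Psi Redge_Psi)
  qed
  show ?thesis using is_perm_Psi Phi_Psi Redge_Psi Phi by auto
qed

end
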